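(* Let $p,r$ be positive integers, $s=p+2r$, and write elements of $\mathbb{R}^{(p+s)\times p}$ as $X=(X_0;X_1;X_2;X_3)$ with blocks of $p,p,r,r$ rows; set $Z=X_0+iX_1$, $W=X_2+iX_3$. Let $\hat M\in\mathfrak{so}(p+r,\mathbb{C})$ and define $\hat\Phi^*:\mathbb{R}^{(p+s)\times p}\to\mathbb{C}^{(p+r)\times p}$ by $\hat\Phi^*(X)=\binom{Z}{W}+\hat M\binom{\bar Z}{\bar W}$. Then the complex valued components of $\hat\Phi^*$ constitute an orthogonal harmonic family on $\mathbb{R}^{(p+s)\times p}$ equipped with the Euclidean metric.
   Context: $\mathfrak{so}(p+r,\mathbb{C})$ is the set of complex skew-symmetric $(p+r)\times(p+r)$ matrices. The Euclidean metric is $\langle X,Y\rangle=\mathrm{trace}(X^tY)$. For a Riemannian manifold $(M,g)$ and complex functions $\phi,\psi$, $\tau(\phi)$ is the Laplace–Beltrami operator (extended complex-linearly) and $\kappa(\phi,\psi)=g(\mathrm{grad}\,\phi,\mathrm{grad}\,\psi)$ with $g$ extended complex-bilinearly. A set $\Omega$ of complex functions is an orthogonal harmonic family if $\tau(\phi)=0$ and $\kappa(\phi,\psi)=0$ for all $\phi,\psi\in\Omega$. *)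

theory Defs
  imports "HOL-Analysis.Analysis"
begin

text \<open>A point of the real matrix space R^{N x m} is represented as X :: nat => nat => real,
  only the entries X i j with i < N, j < m being coordinates.\<close>

definition coord_shift :: "(nat \<Rightarrow> nat \<Rightarrow> real) \<Rightarrow> nat \<Rightarrow> nat \<Rightarrow> real \<Rightarrow> (nat \<Rightarrow> nat \<Rightarrow> real)" where
  "coord_shift X i j t = X(i := (X i)(j := X i j + t))"

definition partial_ij :: "((nat \<Rightarrow> nat \<Rightarrow> real) \<Rightarrow> complex) \<Rightarrow> nat \<Rightarrow> nat \<Rightarrow> (nat \<Rightarrow> nat \<Rightarrow> real) \<Rightarrow> complex" where
  "partial_ij f i j X = vector_derivative (\<lambda>t. f (coord_shift X i j t)) (at 0)"

definition tension :: "nat \<Rightarrow> nat \<Rightarrow> ((nat \<Rightarrow> nat \<Rightarrow> real) \<Rightarrow> complex) \<Rightarrow> (nat \<Rightarrow> nat \<Rightarrow> real) \<Rightarrow> complex" where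
  "tension N m f X = (\<Sum>i<N. \<Sum>j<m. partial_ij (partial_ij f i j) i j X)"

definition conformality :: "nat \<Rightarrow> nat \<Rightarrow> ((nat \<Rightarrow> nat \<Rightarrow> real) \<Rightarrow> complex) \<Rightarrow> ((nat \<Rightarrow> nat \<Rightarrow> real) \<Rightarrow> complex) \<Rightarrow> (nat \<Rightarrow> nat \<Rightarrow> real) \<Rightarrow> complex" where
  "conformality N m f g X = (\<Sum>i<N. \<Sum>j<m. partial_ij f i j X * partial_ij g i j X)"

definition orthogonal_harmonic_family :: "nat \<Rightarrow> nat \<Rightarrow> ((nat \<Rightarrow> nat \<Rightarrow> real) \<Rightarrow> complex) set \<Rightarrow> bool" where
  "orthogonal_harmonic_family N m \<Omega> \<longleftrightarrow>
     (\<forall>\<phi>\<in>\<Omega>. \<forall>X. tension N m \<phi> X = 0) \<and>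
     (\<forall>\<phi>\<in>\<Omega>. \<forall>\<psi>\<in>\<Omega>. \<forall>X. conformality N m \<phi> \<psi> X = 0)"

definition ZW :: "nat \<Rightarrow> nat \<Rightarrow> (nat \<Rightarrow> nat \<Rightarrow> real) \<Rightarrow> nat \<Rightarrow> nat \<Rightarrow> complex" where
  "ZW p r X a b =
     (if a < p then complex_of_real (X a b) + \<i> * complex_of_real (X (p + a) b)
      else complex_of_real (X (2*p + (a - p)) b) + \<i> * complex_of_real (X (2*p + r + (a - p)) b))"

definition PhiStar :: "nat \<Rightarrow> nat \<Rightarrow> (nat \<Rightarrow> nat \<Rightarrow> complex) \<Rightarrow> (nat \<Rightarrow> nat \<Rightarrow> real) \<Rightarrow> nat \<Rightarrow> nat \<Rightarrow> complex" where
  "PhiStar p r M X a b = ZW p r X a b + (\<Sum>c<p+r. M a c * cnj (ZW p r X c b))"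

end

theory Submission
  imports Defs
begin

text \<open>Each component of \<open>\<Phi>\<^sup>*\<close> is real linear in X, so it is harmonic and its gradient
  is constant. The gradient of the component (a,b) is supported in column b, and in the two rows
  of X carrying the real and imaginary parts of the entry (c,b) of (Z;W) it equals
  \<delta>(a,c) + M(a,c) and i(\<delta>(a,c) - M(a,c)). So gradients of components in different columns
  are orthogonal, while for (a,b) and (a',b) the complex-bilinear product is
  \<Sum>_c (\<delta>(a,c) + M(a,c))(\<delta>(a',c) + M(a',c)) - (\<delta>(a,c) - M(a,c))(\<delta>(a',c) - M(a',c))
  = 2(M(a',a) + M(a,a')), which vanishes because M is skew-symmetric.\<close>

definition matrix_unit :: "nat \<Rightarrow> nat \<Rightarrow> nat \<Rightarrow> nat \<Rightarrow> real" where
  "matrix_unit i j = (\<lambda>k l. of_bool (k = i \<and> l = j))"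

definition coord_linear :: "((nat \<Rightarrow> nat \<Rightarrow> real) \<Rightarrow> complex) \<Rightarrow> bool" where
  "coord_linear f \<longleftrightarrow> (\<forall>X Y t. f (\<lambda>k l. X k l + t * Y k l) = f X + of_real t * f Y)"

lemma coord_shift_eq_add_matrix_unit:
  "coord_shift X i j t = (\<lambda>k l. X k l + t * matrix_unit i j k l)"
  unfolding coord_shift_def matrix_unit_def by (auto simp: fun_eq_iff)

lemma partial_ij_coord_linear:
  assumes "coord_linear f"
  shows "partial_ij f i j X = f (matrix_unit i j)"
proof -
  have line: "(\<lambda>t. f (coord_shift X i j t)) = (\<lambda>t. f X + t *\<^sub>R f (matrix_unit i j))"
    using assms by (simp add: coord_linear_def coord_shift_eq_add_matrix_unit scaleR_conv_of_real)
  have "((\<lambda>t. f X + t *\<^sub>R f (matrix_unit i j)) has_vector_derivative f (matrix_unit i j)) (at 0)"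
    by (auto intro!: derivative_eq_intros)
  then show ?thesis
    unfolding partial_ij_def line by (rule vector_derivative_at)
qed

lemma tension_coord_linear:
  assumes "coord_linear f"
  shows "tension N m f X = 0"
proof -
  have "partial_ij (partial_ij f i j) i j X = 0" for i j
    unfolding partial_ij_coord_linear[OF assms, abs_def]
    by (simp add: partial_ij_def vector_derivative_const_at)
  then show ?thesis
    unfolding tension_def by simp
qed

lemma conformality_coord_linear:
  assumes "coord_linear f" and "coord_linear g"
  shows "conformality N m f g X = (\<Sum>i<N. \<Sum>j<m. f (matrix_unit i j) * g (matrix_unit i j))"
  unfolding conformality_def partial_ij_coord_linear[OF assms(1)] partial_ij_coord_linear[OF assms(2)] ..

definition re_row :: "nat \<Rightarrow> nat \<Rightarrow> nat" where
  "re_row p c = (if c < p then c else p + c)"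

definition im_row :: "nat \<Rightarrow> nat \<Rightarrow> nat \<Rightarrow> nat" where
  "im_row p r c = (if c < p then p + c else p + r + c)"

lemma ZW_eq_rows:
  "ZW p r X c b = of_real (X (re_row p c) b) + \<i> * of_real (X (im_row p r c) b)"
  unfolding ZW_def re_row_def im_row_def by (simp add: numeral_2_eq_2 add.assoc)

lemma re_row_eq_iff [simp]: "re_row p c = re_row p d \<longleftrightarrow> c = d"
  unfolding re_row_def by auto

lemma im_row_eq_iff [simp]: "im_row p r c = im_row p r d \<longleftrightarrow> c = d"
  unfolding im_row_def by auto

lemma re_row_neq_im_row [simp]: "c < p + r \<Longrightarrow> re_row p c \<noteq> im_row p r d"
  unfolding re_row_def im_row_def by auto

lemma sum_split_rows:
  "(\<Sum>i<p + (p + 2*r). h i) = (\<Sum>c<p+r. h (re_row p c) + h (im_row p r c))"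
proof -
  have rows: "{..<p + (p + 2*r)} = re_row p ` {..<p+r} \<union> im_row p r ` {..<p+r}"
  proof (intro equalityI subsetI)
    fix i assume "i \<in> {..<p + (p + 2*r)}"
    then have "i < 2*p + 2*r" by simp
    then consider "i < p" | "p \<le> i" "i < 2*p" | "2*p \<le> i" "i < 2*p + r" | "2*p + r \<le> i" "i < 2*p + 2*r"
      by linarith
    then show "i \<in> re_row p ` {..<p+r} \<union> im_row p r ` {..<p+r}"
    proof cases
      case 1 then have "i = re_row p i" by (simp add: re_row_def)
      with 1 show ?thesis by force
    next
      case 2 then have "i = im_row p r (i - p)" by (auto simp: im_row_def)
      with 2 show ?thesis by force
    next
      case 3 then have "i = re_row p (i - p)" by (simp add: re_row_def)
      with 3 show ?thesis by force
    next
      case 4 then have "i = im_row p r (i - p - r)" by (auto simp: im_row_def)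
      with 4 show ?thesis by force
    qed
  qed (auto simp: re_row_def im_row_def)
  have "re_row p ` {..<p+r} \<inter> im_row p r ` {..<p+r} = {}"
    by auto
  then show ?thesis
    unfolding rows by (simp add: sum.union_disjoint sum.reindex inj_on_def sum.distrib)
qed

lemma coord_linear_PhiStar: "coord_linear (\<lambda>X. PhiStar p r M X a b)"
proof -
  have ZW_linear: "ZW p r (\<lambda>k l. X k l + t * Y k l) c b = ZW p r X c b + of_real t * ZW p r Y c b"
    for X Y t c
    unfolding ZW_eq_rows by (simp add: algebra_simps)
  show ?thesis
    unfolding coord_linear_def PhiStar_def ZW_linear
    by (simp add: algebra_simps sum.distrib sum_distrib_left)
qed

lemma PhiStar_matrix_unit_other_column:
  "j \<noteq> b \<Longrightarrow> PhiStar p r M (matrix_unit i j) a b = 0"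
  unfolding PhiStar_def ZW_eq_rows matrix_unit_def by simp

lemma ZW_matrix_unit_re_row:
  "c < p + r \<Longrightarrow> ZW p r (matrix_unit (re_row p c) b) d b = of_bool (d = c)"
  unfolding ZW_eq_rows matrix_unit_def by (auto simp: eq_commute[of "im_row p r d"])

lemma ZW_matrix_unit_im_row:
  "d < p + r \<Longrightarrow> ZW p r (matrix_unit (im_row p r c) b) d b = \<i> * of_bool (d = c)"
  unfolding ZW_eq_rows matrix_unit_def by auto

lemma PhiStar_matrix_unit_re_row:
  assumes "a < p + r" "c < p + r"
  shows "PhiStar p r M (matrix_unit (re_row p c) b) a b = of_bool (a = c) + M a c"
proof -
  have "(\<Sum>d<p+r. M a d * cnj (ZW p r (matrix_unit (re_row p c) b) d b)) = M a c"
    using assms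
    by (simp add: ZW_matrix_unit_re_row of_bool_def if_distrib[of cnj] if_distrib[of "\<lambda>x. _ * x"]
        cong: if_cong)
  then show ?thesis
    using assms unfolding PhiStar_def by (simp add: ZW_matrix_unit_re_row)
qed

lemma PhiStar_matrix_unit_im_row:
  assumes "a < p + r" "c < p + r"
  shows "PhiStar p r M (matrix_unit (im_row p r c) b) a b = \<i> * (of_bool (a = c) - M a c)"
proof -
  have "(\<Sum>d<p+r. M a d * cnj (ZW p r (matrix_unit (im_row p r c) b) d b)) = - \<i> * M a c"
    using assms
    by (simp add: ZW_matrix_unit_im_row of_bool_def if_distrib[of cnj] if_distrib[of "\<lambda>x. _ * x"]
        cong: if_cong)
  then show ?thesis
    using assms unfolding PhiStar_def by (simp add: ZW_matrix_unit_im_row algebra_simps)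
qed

lemma PhiStar_gradients_orthogonal:
  assumes skew: "\<forall>a<p+r. \<forall>c<p+r. M a c = - M c a" and a: "a < p + r" and a': "a' < p + r"
  shows "(\<Sum>i<p + (p + 2*r). PhiStar p r M (matrix_unit i b) a b * PhiStar p r M (matrix_unit i b) a' b) = 0"
proof -
  have row_pair:
    "PhiStar p r M (matrix_unit (re_row p c) b) a b * PhiStar p r M (matrix_unit (re_row p c) b) a' b
     + PhiStar p r M (matrix_unit (im_row p r c) b) a b * PhiStar p r M (matrix_unit (im_row p r c) b) a' b
     = 2 * (of_bool (a = c) * M a' c + of_bool (a' = c) * M a c)"
    if "c < p + r" for c
    using that a a'
    by (simp only: PhiStar_matrix_unit_re_row PhiStar_matrix_unit_im_row) (simp add: algebra_simps)
  have "(\<Sum>i<p + (p + 2*r). PhiStar p r M (matrix_unit i b) a b * PhiStar p r M (matrix_unit i b) a' b)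
      = (\<Sum>c<p+r. 2 * (of_bool (a = c) * M a' c + of_bool (a' = c) * M a c))"
    unfolding sum_split_rows by (rule sum.cong) (simp_all add: row_pair)
  also have "\<dots> = 2 * (M a' a + M a a')"
    using a a' by (simp add: sum.distrib flip: sum_distrib_left)
  also have "\<dots> = 0"
    using skew[rule_format, OF a a'] by simp
  finally show ?thesis .
qed

lemma conformality_PhiStar:
  assumes "b < p" "b' < p"
  shows "conformality N p (\<lambda>X. PhiStar p r M X a b) (\<lambda>X. PhiStar p r M X a' b') X
    = of_bool (b = b') * (\<Sum>i<N. PhiStar p r M (matrix_unit i b) a b * PhiStar p r M (matrix_unit i b) a' b)"
proof -
  have column_sum: "(\<Sum>j<p. PhiStar p r M (matrix_unit i j) a b * PhiStar p r M (matrix_unit i j) a' b')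
      = of_bool (b = b') * (PhiStar p r M (matrix_unit i b) a b * PhiStar p r M (matrix_unit i b) a' b)"
    for i
  proof -
    have "(\<Sum>j<p. PhiStar p r M (matrix_unit i j) a b * PhiStar p r M (matrix_unit i j) a' b')
        = (\<Sum>j<p. if b = j then PhiStar p r M (matrix_unit i b) a b * PhiStar p r M (matrix_unit i b) a' b' else 0)"
      by (rule sum.cong) (auto simp: PhiStar_matrix_unit_other_column)
    then show ?thesis
      using assms by (auto simp: PhiStar_matrix_unit_other_column)
  qed
  show ?thesis
    unfolding conformality_coord_linear[OF coord_linear_PhiStar coord_linear_PhiStar] column_sum
    by (simp add: sum_distrib_left)
qed

theorem proposition9p1:
  fixes p r :: nat and M :: "nat \<Rightarrow> nat \<Rightarrow> complex"
  assumes "p > 0" and "r > 0"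
    and skew: "\<forall>a<p+r. \<forall>c<p+r. M a c = - M c a"
  shows "orthogonal_harmonic_family (p + (p + 2*r)) p
           {(\<lambda>X. PhiStar p r M X a b) | a b. a < p + r \<and> b < p}"
  unfolding orthogonal_harmonic_family_def
proof safe
  fix a b X
  show "tension (p + (p + 2*r)) p (\<lambda>X. PhiStar p r M X a b) X = 0"
    by (rule tension_coord_linear[OF coord_linear_PhiStar])
next
  fix a b a' b' X
  assume "a < p + r" "b < p" "a' < p + r" "b' < p"
  then show "conformality (p + (p + 2*r)) p (\<lambda>X. PhiStar p r M X a b) (\<lambda>X. PhiStar p r M X a' b') X = 0"
    by (simp only: conformality_PhiStar PhiStar_gradients_orthogonal[OF skew] mult_zero_right)
qed

end
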